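(* Let $P,K\in\mathcal K^d$ with $P\subset K$ and let $x,y\in K\setminus P$. Write $P^x:=\operatorname{conv}(P\cup\{x\})$, $P^y:=\operatorname{conv}(P\cup\{y\})$, $P^{xy}:=\operatorname{conv}(P\cup\{x,y\})$, and for $w\in K\setminus P$ let $\mathcal V_w(P):=\{z\in K\setminus P:[z,w]\cap P=\emptyset\}$. If $\mathcal V_x(P)\cap\mathcal V_y(P)=\emptyset$, then $$P^x\cap P^y=P,\qquad P^x\cup P^y=P^{xy},$$ and for every valuation $\psi:\mathcal K^d\to\mathbb R$, $$\psi(P^{xy})-\psi(P^x)-\psi(P^y)+\psi(P)=0.$$
   Context: $\mathcal K^d$ is the set of compact convex subsets of $\mathbb R^d$; $[z,w]$ denotes the closed line segment between $z$ and $w$. A valuation is a map $\psi:\mathcal K^d\to\mathbb R$ with $\psi(A)+\psi(B)=\psi(A\cup B)+\psi(A\cap B)$ whenever $A,B,A\cup B\in\mathcal K^d$. *)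

theory Defs
  imports "HOL-Analysis.Analysis"
begin

text \<open>Elements of K^d: compact convex subsets (the empty set included).\<close>
definition convex_body :: "'a::euclidean_space set \<Rightarrow> bool" where
  "convex_body A \<longleftrightarrow> compact A \<and> convex A"

text \<open>Valuation on K^d; psi is a real function on sets whose values matter only on K^d.\<close>
definition valuation :: "('a::euclidean_space set \<Rightarrow> real) \<Rightarrow> bool" where
  "valuation psi \<longleftrightarrow>
     (\<forall>A B. convex_body A \<longrightarrow> convex_body B \<longrightarrow> convex_body (A \<union> B) \<longrightarrow>
        psi A + psi B = psi (A \<union> B) + psi (A \<inter> B))"

definition visible_region :: "'a::euclidean_space set \<Rightarrow> 'a set \<Rightarrow> 'a \<Rightarrow> 'a set" where
  "visible_region K P w = {z \<in> K - P. closed_segment z w \<inter> P = {}}"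

end

theory Submission
  imports Defs
begin

text \<open>Every point of \<open>conv(P \<union> {x})\<close> lies on a segment \<open>[b, x]\<close> with \<open>b \<in> P\<close>. A point \<open>z\<close> of
  \<open>conv(P \<union> {x}) - P\<close> therefore sees \<open>x\<close> past \<open>P\<close>: were some \<open>w \<in> [z, x]\<close> in \<open>P\<close>, then \<open>z\<close>
  would lie between \<open>b\<close> and \<open>w\<close>, hence in \<open>P\<close>. So a point of \<open>P\<^sup>x \<inter> P\<^sup>y\<close> outside \<open>P\<close> would lie in
  \<open>\<V>\<^sub>x(P) \<inter> \<V>\<^sub>y(P)\<close>. Conversely \<open>x \<notin> \<V>\<^sub>y(P)\<close>, so \<open>[x, y]\<close> meets \<open>P\<close> in some \<open>m\<close>; every point of
  \<open>P\<^sup>x\<^sup>y\<close> lies in a triangle \<open>conv{p, x, y}\<close> with \<open>p \<in> P\<close>, and cutting it along \<open>[p, m]\<close> puts the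
  point into \<open>P\<^sup>x\<close> or \<open>P\<^sup>y\<close>. The valuation identity is then the valuation property for \<open>P\<^sup>x, P\<^sup>y\<close>.\<close>

lemma convex_hull_insert_in_segment:
  assumes "convex P" "P \<noteq> {}" "z \<in> convex hull (insert x P)"
  obtains b where "b \<in> P" "z \<in> closed_segment x b"
proof -
  have "convex hull P = P"
    using assms(1) by (rule convex_hull_eq[THEN iffD2])
  then show thesis
    using assms(2,3) that by (auto simp: convex_hull_insert_segments)
qed

lemma closed_segment_disjoint_convex_hull_insert:
  fixes P :: "'a::euclidean_space set"
  assumes "convex P" "z \<in> convex hull (insert x P)" "z \<notin> P"
  shows "closed_segment z x \<inter> P = {}"
proof (rule ccontr)
  assume "closed_segment z x \<inter> P \<noteq> {}"
  then obtain w where "w \<in> P" "w \<in> closed_segment z x"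
    by blast
  then have w: "w \<in> P" "between (z, x) w"
    by (simp_all add: between_mem_segment)
  obtain b where "b \<in> P" "z \<in> closed_segment x b"
    using convex_hull_insert_in_segment[OF assms(1) _ assms(2)] \<open>w \<in> P\<close> by blast
  then have b: "b \<in> P" "between (b, x) z"
    by (simp_all add: between_mem_segment closed_segment_commute)
  have "between (b, x) w"
    using b(2) w(2) by (rule between_trans)
  then have "between (b, w) z"
    using between_swap[of b x z w] b(2) w(2) by simp
  then have "z \<in> closed_segment b w"
    by (simp add: between_mem_segment)
  also have "\<dots> \<subseteq> P"
    using \<open>convex P\<close> b(1) w(1) by (rule closed_segment_subset[rotated 2])
  finally show False
    using \<open>z \<notin> P\<close> by simp
qed

lemma convex_hull_triangle_split:
  fixes p x y m :: "'a::euclidean_space"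
  assumes "m \<in> closed_segment x y"
  shows "convex hull {p, x, y} \<subseteq> convex hull {p, m, x} \<union> convex hull {p, m, y}"
proof
  fix q assume "q \<in> convex hull {p, x, y}"
  then obtain r where r: "r \<in> closed_segment x y" and q: "q \<in> closed_segment p r"
    by (auto simp: convex_hull_insert_segments simp flip: segment_convex_hull)
  have in_hull: "q \<in> convex hull {p, m, u}" if "r \<in> closed_segment u m" for u
  proof -
    have "closed_segment u m \<subseteq> convex hull {p, m, u}"
      by (intro closed_segment_subset convex_convex_hull) (simp_all add: hull_inc)
    with that have "r \<in> convex hull {p, m, u}" ..
    then have "closed_segment p r \<subseteq> convex hull {p, m, u}"
      by (intro closed_segment_subset convex_convex_hull) (simp_all add: hull_inc)
    with q show ?thesis ..
  qed
  have "r \<in> closed_segment x m \<union> closed_segment y m"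
    using r Un_closed_segment[OF assms] by (simp add: closed_segment_commute)
  then show "q \<in> convex hull {p, m, x} \<union> convex hull {p, m, y}"
    using in_hull by blast
qed

lemma convex_hull_insert2_subset_triangle:
  assumes "convex P" "P \<noteq> {}" "q \<in> convex hull (insert x (insert y P))"
  obtains p where "p \<in> P" "q \<in> convex hull {p, x, y}"
proof -
  obtain b where b: "b \<in> convex hull (insert y P)" "q \<in> closed_segment x b"
    using assms by (auto simp: convex_hull_insert_segments)
  obtain p where p: "p \<in> P" "b \<in> closed_segment y p"
    using convex_hull_insert_in_segment[OF assms(1,2) b(1)] .
  have "b \<in> convex hull {p, x, y}"
    using p(2) closed_segment_subset_convex_hull[of y "{p, x, y}" p] by (auto intro: hull_inc)
  moreover have "x \<in> convex hull {p, x, y}"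
    by (simp add: hull_inc)
  ultimately have "closed_segment x b \<subseteq> convex hull {p, x, y}"
    by (simp add: closed_segment_subset)
  with p(1) b(2) show thesis
    using that by blast
qed

lemma convex_hull_insert_Un_through_point:
  fixes P :: "'a::euclidean_space set"
  assumes "convex P" "m \<in> P" "m \<in> closed_segment x y"
  shows "convex hull (insert x P) \<union> convex hull (insert y P) = convex hull (insert x (insert y P))"
proof
  show "convex hull (insert x P) \<union> convex hull (insert y P) \<subseteq> convex hull (insert x (insert y P))"
    by (intro Un_least hull_mono) auto
  show "convex hull (insert x (insert y P)) \<subseteq> convex hull (insert x P) \<union> convex hull (insert y P)"
  proof
    fix q assume "q \<in> convex hull (insert x (insert y P))"
    then obtain p where "p \<in> P" "q \<in> convex hull {p, x, y}"
      using convex_hull_insert2_subset_triangle assms(1,2) by blast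
    then have "q \<in> convex hull {p, m, x} \<union> convex hull {p, m, y}"
      using convex_hull_triangle_split[OF assms(3)] by blast
    moreover have "convex hull {p, m, x} \<subseteq> convex hull (insert x P)"
      "convex hull {p, m, y} \<subseteq> convex hull (insert y P)"
      using \<open>p \<in> P\<close> \<open>m \<in> P\<close> by (intro hull_mono; auto)+
    ultimately show "q \<in> convex hull (insert x P) \<union> convex hull (insert y P)"
      by blast
  qed
qed

lemma convex_hull_insert_minus_subset_visible_region:
  fixes P K :: "'a::euclidean_space set"
  assumes "convex P" "convex K" "P \<subseteq> K" "w \<in> K"
  shows "convex hull (insert w P) - P \<subseteq> visible_region K P w"
proof
  fix z assume z: "z \<in> convex hull (insert w P) - P"
  have "convex hull (insert w P) \<subseteq> K"
    using assms(2-4) by (intro hull_minimal) auto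
  with z show "z \<in> visible_region K P w"
    using closed_segment_disjoint_convex_hull_insert[OF assms(1)]
    by (auto simp: visible_region_def)
qed

lemma convex_hull_insert_Int_eq_if_visible_regions_disjoint:
  fixes P K :: "'a::euclidean_space set"
  assumes "convex P" "convex K" "P \<subseteq> K" "x \<in> K" "y \<in> K"
    and "visible_region K P x \<inter> visible_region K P y = {}"
  shows "convex hull (insert x P) \<inter> convex hull (insert y P) = P"
proof -
  have "convex hull (insert x P) \<inter> convex hull (insert y P) - P
          \<subseteq> visible_region K P x \<inter> visible_region K P y"
    using convex_hull_insert_minus_subset_visible_region[OF assms(1-3)] assms(4,5) by blast
  moreover have "P \<subseteq> convex hull (insert x P) \<inter> convex hull (insert y P)"
    by (auto intro: hull_inc)
  ultimately show ?thesis
    using assms(6) by blast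
qed

lemma convex_body_convex_hull: "compact S \<Longrightarrow> convex_body (convex hull S)"
  by (simp add: convex_body_def compact_convex_hull)

lemma valuation_inclusion_exclusion:
  assumes "valuation psi" "convex_body A" "convex_body B" "convex_body (A \<union> B)"
  shows "psi (A \<union> B) - psi A - psi B + psi (A \<inter> B) = 0"
  using assms unfolding valuation_def by force

theorem lemma4p3:
  fixes P K :: "'a::euclidean_space set" and x y :: 'a
  assumes "convex_body P" and "convex_body K" and "P \<subseteq> K"
    and "x \<in> K - P" and "y \<in> K - P"
    and "visible_region K P x \<inter> visible_region K P y = {}"
  shows "convex hull (P \<union> {x}) \<inter> convex hull (P \<union> {y}) = P
       \<and> convex hull (P \<union> {x}) \<union> convex hull (P \<union> {y}) = convex hull (P \<union> {x, y})
       \<and> (\<forall>psi :: 'a set \<Rightarrow> real. valuation psi \<longrightarrow>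
           psi (convex hull (P \<union> {x, y})) - psi (convex hull (P \<union> {x}))
             - psi (convex hull (P \<union> {y})) + psi P = 0)"
proof -
  have "convex P" "compact P" "convex K"
    using assms(1,2) by (auto simp: convex_body_def)
  have Int: "convex hull (insert x P) \<inter> convex hull (insert y P) = P"
    using convex_hull_insert_Int_eq_if_visible_regions_disjoint[OF \<open>convex P\<close> \<open>convex K\<close>] assms(3-6)
    by blast
  have "x \<notin> visible_region K P y"
    using assms(4,6) by (auto simp: visible_region_def)
  then obtain m where "m \<in> P" "m \<in> closed_segment x y"
    using assms(4) by (auto simp: visible_region_def closed_segment_commute)
  then have Un: "convex hull (insert x P) \<union> convex hull (insert y P) = convex hull (insert x (insert y P))"
    using convex_hull_insert_Un_through_point[OF \<open>convex P\<close>] by blast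
  have bodies: "convex_body (convex hull (insert x P))" "convex_body (convex hull (insert y P))"
      "convex_body (convex hull (insert x (insert y P)))"
    using \<open>compact P\<close> by (simp_all add: convex_body_convex_hull)
  note V = valuation_inclusion_exclusion[OF _ bodies(1,2) bodies(3)[folded Un], unfolded Int Un]
  show ?thesis
    using Int Un V by simp
qed

end
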